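(* Let $\mu_4$ be the $4$-fold convolution of the standard middle-third Cantor measure, i.e. the self-similar measure with $d=3$, $m=4$, $(p_0,\dots,p_4)=\tfrac1{16}(1,4,6,4,1)$. Then $$\alpha_4^*:=\sup\left(\Delta\mu_4\setminus\{4\log2/\log3\}\right)=\frac{\log(16/5)}{\log3},$$ and this value is attained as the local dimension of $\mu_4$ at $x=1/2$.
   Context: Given integers $d\ge3$, $m\ge d$ and a probability vector $(p_0,\dots,p_m)$, the associated self-similar measure is the unique compactly supported Borel probability measure $\mu$ with $\mu(A)=\sum_{i=0}^m p_i\,\mu(dA-i)$ for all Borel $A$. The standard Cantor measure is the one with $d=3$, $m=1$, $p_0=p_1=1/2$ (supported on $[0,1/2]$ in this normalization); its $4$-fold convolution is the self-similar measure with $d=3$, $m=4$, $p_i=\binom4i/16$. $\Delta\mu$ is the set of values $\dim\mu(x)=\lim_{r\to0^+}\log\mu(B(x,r))/\log r$ over $x\in\operatorname{supp}\mu$ where this limit exists; for $\mu_4$ the maximal element of $\Delta\mu_4$ is $4\log2/\log3$. *)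

theory Defs
  imports "HOL-Probability.Probability"
begin

definition self_similar_measure :: "nat \<Rightarrow> nat \<Rightarrow> (nat \<Rightarrow> real) \<Rightarrow> real measure \<Rightarrow> bool" where
  "self_similar_measure d m p M \<longleftrightarrow>
     prob_space M \<and> sets M = sets borel \<and>
     (\<exists>K. compact K \<and> emeasure M (- K) = 0) \<and>
     (\<forall>A\<in>sets borel. measure M A =
        (\<Sum>i\<le>m. p i * measure M ((\<lambda>a. real d * a - real i) ` A)))"

definition msupp :: "real measure \<Rightarrow> real set" where
  "msupp M = {x. \<forall>r>0. emeasure M (cball x r) > 0}"

definition has_local_dim :: "real measure \<Rightarrow> real \<Rightarrow> real \<Rightarrow> bool" where
  "has_local_dim M x a \<longleftrightarrow>
     ((\<lambda>r. ln (measure M (cball x r)) / ln r) \<longlongrightarrow> a) (at_right 0)"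

definition local_dims :: "real measure \<Rightarrow> real set" where
  "local_dims M = {a. \<exists>x\<in>msupp M. has_local_dim M x a}"

end

theory Submission
  imports Defs
begin

(* Write S_i x = (x + i) / 3 and p_i = binomial 4 i / 16, so that mu is supported on [0, 2].
   At the endpoints 0 and 2 only S_0, resp. S_4, contributes near the point, which gives
   mu(B(0, r / 3)) = mu(B(0, r)) / 16 and local dimension log 3 16 = 4 log 2 / log 3.
   Near 1/2 only two maps contribute: for small r the masses of B(1/2, r) and B(3/2, r) are
   transformed by the matrix [[4, 1], [1, 4]] / 16, whose growth rate 5/16 gives the local
   dimension log 3 (16/5) at 1/2.
   Every other point of (0, 2) is carried into [1/2, 3/2] by finitely many maps, and there the
   n-fold self-similarity bounds mu(B(y, 3^-n)) from below by a sum of two adjacent weights of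
   the level-n binomial cascade, divided by 16.  A three-case invariant, stable under one
   refinement step, shows that two adjacent weights in the central window always sum to at least
   (5/16)^n; hence no local dimension other than log 3 16 exceeds log 3 (16/5). *)

lemma affine_image_cball:
  fixes c t y r :: real
  assumes "c > 0"
  shows "(\<lambda>a. c * a - t) ` cball y r = cball (c * y - t) (c * r)"
proof -
  have "(\<lambda>a. c * a - t) = (+) (- t) \<circ> (\<lambda>a. c *\<^sub>R a)" by auto
  then show ?thesis
    using assms by (simp only: image_comp[symmetric] cball_scale image_add_cball) simp
qed

lemma affine_image_borel:
  fixes c t :: real
  assumes "c \<noteq> 0" "A \<in> sets borel"
  shows "(\<lambda>a. c * a - t) ` A \<in> sets borel"
proof -
  have "(\<lambda>a. c * a - t) ` A = (\<lambda>x. (x + t) / c) -` A"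
    using assms(1) by (force simp: field_simps)
  moreover have "(\<lambda>x. (x + t) / c) \<in> borel_measurable borel" by measurable
  ultimately show ?thesis
    using measurable_sets_borel assms(2) by metis
qed

lemma sum_reindex_affine:
  fixes f h :: "nat \<Rightarrow> real"
  assumes "d > 0" "d * R + i \<le> R'" "\<And>j. R < j \<Longrightarrow> f j = 0"
  shows "(\<Sum>j\<le>R. f j * h (d * j + i))
       = (\<Sum>k\<le>R'. if i \<le> k \<and> d dvd (k - i) then f ((k - i) div d) * h k else 0)"
proof -
  have "(\<Sum>k\<le>R'. if i \<le> k \<and> d dvd (k - i) then f ((k - i) div d) * h k else 0)
      = (\<Sum>k\<in>{k\<in>{..R'}. i \<le> k \<and> d dvd (k - i)}. f ((k - i) div d) * h k)"
    by (rule sum.inter_filter[symmetric]) simp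
  also have "\<dots> = (\<Sum>j\<in>{j. d * j + i \<le> R'}. f j * h (d * j + i))"
  proof (rule sum.reindex_cong[where l = "\<lambda>j. d * j + i"])
    show "inj_on (\<lambda>j. d * j + i) {j. d * j + i \<le> R'}"
      using assms(1) by (auto simp: inj_on_def)
    show "{k\<in>{..R'}. i \<le> k \<and> d dvd (k - i)} = (\<lambda>j. d * j + i) ` {j. d * j + i \<le> R'}"
    proof (intro equalityI subsetI)
      fix k assume "k \<in> {k\<in>{..R'}. i \<le> k \<and> d dvd (k - i)}"
      then obtain j where "k - i = d * j" "i \<le> k" "k \<le> R'" by auto
      then show "k \<in> (\<lambda>j. d * j + i) ` {j. d * j + i \<le> R'}"
        by (intro image_eqI[of _ _ j]) auto
    qed auto
  qed (use assms(1) in simp)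
  also have "\<dots> = (\<Sum>j\<le>R. f j * h (d * j + i))"
  proof (rule sum.mono_neutral_right)
    have "j \<le> d * j + i" for j using assms(1) by (cases d) auto
    then have "{j. d * j + i \<le> R'} \<subseteq> {..R'}" by (auto intro: order_trans)
    then show "finite {j. d * j + i \<le> R'}" by (rule finite_subset) simp
    show "{..R} \<subseteq> {j. d * j + i \<le> R'}"
      using assms(2) by (auto intro: order_trans[rotated])
  qed (use assms(3) in auto)
  finally show ?thesis ..
qed

(* The coefficient of x^k in the product of P(x^(d^l)) over l < n, where P(x) is the sum of
   p_i x^i; equivalently the total weight p_(i_1) ... p_(i_n) of the compositions
   S_(i_1) \<circ> ... \<circ> S_(i_n) of the maps S_i x = (x + i) / d that send 0 to k / d^n. *)
fun iterated_weight :: "nat \<Rightarrow> nat \<Rightarrow> (nat \<Rightarrow> real) \<Rightarrow> nat \<Rightarrow> nat \<Rightarrow> real" where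
  "iterated_weight d m p 0 k = (if k = 0 then 1 else 0)"
| "iterated_weight d m p (Suc n) k = (\<Sum>i\<le>m. if i \<le> k \<and> d dvd (k - i)
      then p i * iterated_weight d m p n ((k - i) div d) else 0)"

lemma iterated_weight_nonneg:
  "(\<And>i. 0 \<le> p i) \<Longrightarrow> 0 \<le> iterated_weight d m p n k"
  by (induction n arbitrary: k) (auto intro!: sum_nonneg)

lemma iterated_weight_eq_0:
  assumes "d \<ge> 2" "m * (d ^ n - 1) < k"
  shows "iterated_weight d m p n k = 0"
  using assms(2)
proof (induction n arbitrary: k)
  case (Suc n)
  have "iterated_weight d m p n ((k - i) div d) = 0" if "i \<le> m" "i \<le> k" "d dvd (k - i)" for i
  proof (rule Suc.IH)
    obtain j where "k - i = d * j" using \<open>d dvd (k - i)\<close> by blast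
    then have j: "k = d * j + i" "(k - i) div d = j" using that(2) assms(1) by simp_all
    have pow: "1 \<le> d ^ n" using assms(1) by simp
    have "real (m * (d ^ Suc n - 1)) < real k" using Suc.prems by (simp only: of_nat_less_iff)
    moreover have "1 \<le> d * d ^ n" using pow assms(1) by simp
    then have "real (m * (d ^ Suc n - 1)) = real m * (real d * real d ^ n - 1)"
      by simp
    moreover have "real k = real d * real j + real i" using j(1) by simp
    moreover have "real i \<le> real m" "2 * real m \<le> real d * real m"
      using that(1) assms(1) by (simp_all add: mult_right_mono)
    ultimately have "real d * (real m * (real d ^ n - 1)) < real d * real j"
      by (simp add: algebra_simps)
    then have "real m * (real d ^ n - 1) < real j"
      using assms(1) by simp
    moreover have "real (m * (d ^ n - 1)) = real m * (real d ^ n - 1)"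
      using pow by simp
    ultimately show "m * (d ^ n - 1) < (k - i) div d"
      unfolding j(2) by linarith
  qed
  then show ?case by (auto intro!: sum.neutral)
qed simp

section \<open>Local dimensions from geometric bounds\<close>

lemma power_eq_powr_log:
  fixes b \<rho> :: real
  assumes "b > 1" "\<rho> > 0"
  shows "\<rho> ^ n = (1 / b ^ n) powr log b (1 / \<rho>)"
proof -
  have "\<rho> ^ n = \<rho> powr real n" using assms by (simp add: powr_realpow)
  also have "\<dots> = (1 / b ^ n) powr log b (1 / \<rho>)"
    using assms by (simp add: powr_def log_def ln_div ln_realpow)
  finally show ?thesis .
qed

lemma ex_scale_between:
  fixes b r s :: real
  assumes "b > 1" "0 < r" "r \<le> s"
  obtains n where "s / b ^ Suc n < r" "r \<le> s / b ^ n"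
proof -
  obtain N where "(1 / b) ^ N < r / s"
    using real_arch_pow_inv[of "r / s" "1 / b"] assms by auto
  then have "s / b ^ N < r"
    using assms by (simp add: field_simps)
  then obtain k where k: "s / b ^ k < r" "\<And>i. i < k \<Longrightarrow> \<not> s / b ^ i < r"
    using ex_least_nat_le[of "\<lambda>i. s / b ^ i < r"] by blast
  moreover have "k \<noteq> 0" using k(1) assms(3) by (cases k) auto
  ultimately show thesis
    using that[of "k - 1"] by (cases k) (auto simp: not_less)
qed

lemma powr_lower_bound_of_geometric:
  fixes f :: "real \<Rightarrow> real"
  assumes "b > 1" "s > 0" "C > 0" "0 < \<rho>" "\<rho> \<le> 1"
    and mono: "\<And>r t. 0 < r \<Longrightarrow> r \<le> t \<Longrightarrow> f r \<le> f t"
    and lower: "\<And>n. C * \<rho> ^ n \<le> f (s / b ^ n)"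
  shows "\<exists>C'>0. \<forall>r\<in>{0<..s}. C' * r powr log b (1 / \<rho>) \<le> f r"
proof (intro exI ballI conjI)
  define \<alpha> where "\<alpha> = log b (1 / \<rho>)"
  have "\<alpha> \<ge> 0" using assms(1,4,5) by (simp add: \<alpha>_def)
  show "C * \<rho> / s powr \<alpha> > 0" using assms(2-4) by simp
  fix r :: real assume r: "r \<in> {0<..s}"
  then obtain n where n: "s / b ^ Suc n < r" "r \<le> s / b ^ n"
    using ex_scale_between[OF assms(1)] by auto
  have "C * \<rho> / s powr \<alpha> * r powr \<alpha> = C * \<rho> * (r / s) powr \<alpha>"
    using r assms(2) by (simp add: powr_divide)
  also have "\<dots> \<le> C * \<rho> * (1 / b ^ n) powr \<alpha>"
  proof -
    have "r / s \<le> (s / b ^ n) / s" using n(2) assms(2) by (intro divide_right_mono) simp_all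
    then show ?thesis
      using r assms(2-4) \<open>\<alpha> \<ge> 0\<close> by (intro mult_left_mono powr_mono2) simp_all
  qed
  also have "\<dots> = C * \<rho> ^ Suc n"
    unfolding \<alpha>_def by (simp only: power_eq_powr_log[OF assms(1,4)] mult.assoc power_Suc)
  also have "\<dots> \<le> f (s / b ^ Suc n)" by (rule lower)
  also have "\<dots> \<le> f r" using n assms(1,2) by (intro mono) auto
  finally show "C * \<rho> / s powr \<alpha> * r powr log b (1 / \<rho>) \<le> f r" by (simp add: \<alpha>_def)
qed

lemma powr_upper_bound_of_geometric:
  fixes f :: "real \<Rightarrow> real"
  assumes "b > 1" "s > 0" "0 < \<rho>" "\<rho> \<le> 1" "D \<ge> 0"
    and mono: "\<And>r t. 0 < r \<Longrightarrow> r \<le> t \<Longrightarrow> f r \<le> f t"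
    and upper: "\<And>n. f (s / b ^ n) \<le> D * \<rho> ^ n"
  shows "\<exists>D'. \<forall>r\<in>{0<..s}. f r \<le> D' * r powr log b (1 / \<rho>)"
proof (intro exI ballI)
  define \<alpha> where "\<alpha> = log b (1 / \<rho>)"
  have "\<alpha> \<ge> 0" using assms(1,3,4) by (simp add: \<alpha>_def)
  fix r :: real assume r: "r \<in> {0<..s}"
  then obtain n where n: "s / b ^ Suc n < r" "r \<le> s / b ^ n"
    using ex_scale_between[OF assms(1)] by auto
  have "f r \<le> f (s / b ^ n)" using n r by (intro mono) auto
  also have "\<dots> \<le> D * \<rho> ^ n" by (rule upper)
  also have "\<dots> = D / \<rho> * \<rho> ^ Suc n"
    using assms(3) by simp
  also have "\<dots> = D / \<rho> * (1 / b ^ Suc n) powr \<alpha>"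
    unfolding \<alpha>_def by (simp only: power_eq_powr_log[OF assms(1,3)])
  also have "\<dots> \<le> D / \<rho> * (r / s) powr \<alpha>"
  proof -
    have "(s / b ^ Suc n) / s \<le> r / s" using n(1) assms(2) by (intro divide_right_mono) simp_all
    then show ?thesis
      using assms(1-5) \<open>\<alpha> \<ge> 0\<close> by (intro mult_left_mono powr_mono2) simp_all
  qed
  also have "\<dots> = D / \<rho> / s powr \<alpha> * r powr \<alpha>"
    using r assms(2) by (simp add: powr_divide)
  finally show "f r \<le> D / \<rho> / s powr \<alpha> * r powr log b (1 / \<rho>)" by (simp add: \<alpha>_def)
qed

lemma tendsto_plus_div_ln_at_right_0: "((\<lambda>r. a + K / ln r) \<longlongrightarrow> (a::real)) (at_right 0)"
proof -
  have "filterlim ln at_infinity (at_right (0::real))"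
    using ln_at_0 at_bot_le_at_infinity filterlim_mono by blast
  then show ?thesis
    using tendsto_add[OF tendsto_const tendsto_divide_0[OF tendsto_const]] by fastforce
qed

lemma ln_ratio_le_of_powr_lower:
  fixes r C \<alpha> y :: real
  assumes "0 < r" "r < 1" "C > 0" "C * r powr \<alpha> \<le> y"
  shows "ln y / ln r \<le> \<alpha> + ln C / ln r"
proof -
  have "0 < C * r powr \<alpha>" using assms(1,3) by simp
  then have "ln (C * r powr \<alpha>) \<le> ln y" using assms(4) by (subst ln_le_cancel_iff) auto
  then have "ln C + \<alpha> * ln r \<le> ln y" using assms(1,3) by (simp add: ln_mult)
  then have "ln y / ln r \<le> (ln C + \<alpha> * ln r) / ln r"
    using assms(1,2) by (simp add: divide_right_mono_neg)
  then show ?thesis using assms(1,2) by (simp add: add_divide_distrib)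
qed

lemma ln_ratio_ge_of_powr_upper:
  fixes r D \<alpha> y :: real
  assumes "0 < r" "r < 1" "0 < y" "y \<le> D * r powr \<alpha>"
  shows "\<alpha> + ln D / ln r \<le> ln y / ln r"
proof -
  have "0 < D * r powr \<alpha>" using assms(3,4) by linarith
  then have "D > 0" using assms(1) by (simp add: zero_less_mult_iff)
  have "ln y \<le> ln (D * r powr \<alpha>)"
    using assms(3,4) \<open>0 < D * r powr \<alpha>\<close> by (subst ln_le_cancel_iff) auto
  then have "ln y \<le> ln D + \<alpha> * ln r" using assms(1) \<open>D > 0\<close> by (simp add: ln_mult)
  then have "(ln D + \<alpha> * ln r) / ln r \<le> ln y / ln r"
    using assms(1,2) by (simp add: divide_right_mono_neg)
  then show ?thesis using assms(1,2) by (simp add: add_divide_distrib)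
qed

lemma tendsto_ln_ratio_of_powr_bounds:
  fixes f :: "real \<Rightarrow> real"
  assumes "s > 0" "C > 0"
    and bounds: "\<And>r. r \<in> {0<..s} \<Longrightarrow> C * r powr \<alpha> \<le> f r \<and> f r \<le> D * r powr \<alpha>"
  shows "((\<lambda>r. ln (f r) / ln r) \<longlongrightarrow> \<alpha>) (at_right 0)"
proof (rule tendsto_sandwich)
  have "\<forall>\<^sub>F r in at_right 0. r \<in> {0<..<min s 1}"
    using assms(1) by (intro eventually_at_right_real) simp
  moreover have "\<alpha> + ln D / ln r \<le> ln (f r) / ln r \<and> ln (f r) / ln r \<le> \<alpha> + ln C / ln r"
    if r: "r \<in> {0<..<min s 1}" for r
  proof
    have f: "C * r powr \<alpha> \<le> f r" "f r \<le> D * r powr \<alpha>" using bounds r by auto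
    moreover have "0 < C * r powr \<alpha>" using assms(2) r by simp
    ultimately have "0 < f r" by linarith
    with f r assms(2) show "\<alpha> + ln D / ln r \<le> ln (f r) / ln r" "ln (f r) / ln r \<le> \<alpha> + ln C / ln r"
      by (auto intro: ln_ratio_le_of_powr_lower ln_ratio_ge_of_powr_upper)
  qed
  ultimately show "\<forall>\<^sub>F r in at_right 0. \<alpha> + ln D / ln r \<le> ln (f r) / ln r"
    "\<forall>\<^sub>F r in at_right 0. ln (f r) / ln r \<le> \<alpha> + ln C / ln r"
    by (auto elim: eventually_mono)
qed (rule tendsto_plus_div_ln_at_right_0)+

lemma ln_ratio_limit_le_of_powr_lower:
  fixes f :: "real \<Rightarrow> real"
  assumes "s > 0" "C > 0" and lower: "\<And>r. r \<in> {0<..s} \<Longrightarrow> C * r powr \<alpha> \<le> f r"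
    and lim: "((\<lambda>r. ln (f r) / ln r) \<longlongrightarrow> a) (at_right 0)"
  shows "a \<le> \<alpha>"
proof (rule tendsto_le[OF _ tendsto_plus_div_ln_at_right_0 lim])
  have "\<forall>\<^sub>F r in at_right 0. r \<in> {0<..<min s 1}"
    using assms(1) by (intro eventually_at_right_real) simp
  then show "\<forall>\<^sub>F r in at_right 0. ln (f r) / ln r \<le> \<alpha> + ln C / ln r"
    by (rule eventually_mono) (use lower assms(2) in \<open>auto intro: ln_ratio_le_of_powr_lower\<close>)
qed simp

lemma measure_cball_mono:
  assumes "finite_measure M" "sets M = sets borel" "r \<le> t"
  shows "measure M (cball x r) \<le> measure M (cball (x::real) t)"
  using assms by (intro finite_measure.finite_measure_mono subset_cball) auto

lemma has_local_dim_of_geometric_bounds: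
  fixes M :: "real measure"
  assumes M: "finite_measure M" "sets M = sets borel"
    and "b > 1" "s > 0" "C > 0" "0 < \<rho>" "\<rho> \<le> 1"
    and lower: "\<And>n. C * \<rho> ^ n \<le> measure M (cball x (s / b ^ n))"
    and upper: "\<And>n. measure M (cball x (s / b ^ n)) \<le> D * \<rho> ^ n"
  shows "has_local_dim M x (log b (1 / \<rho>))"
proof -
  have "D \<ge> 0" using lower[of 0] upper[of 0] assms(5) by simp
  obtain C' where "C' > 0" "\<forall>r\<in>{0<..s}. C' * r powr log b (1 / \<rho>) \<le> measure M (cball x r)"
    using powr_lower_bound_of_geometric[OF assms(3-7) measure_cball_mono[OF M] lower] by blast
  moreover obtain D' where "\<forall>r\<in>{0<..s}. measure M (cball x r) \<le> D' * r powr log b (1 / \<rho>)"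
    using powr_upper_bound_of_geometric[OF assms(3,4,6,7) \<open>D \<ge> 0\<close> measure_cball_mono[OF M] upper]
    by blast
  ultimately show ?thesis
    unfolding has_local_dim_def using assms(4)
      by (intro tendsto_ln_ratio_of_powr_bounds[where s = s and C = C' and D = D']) auto
qed

lemma local_dim_le_of_geometric_lower:
  fixes M :: "real measure"
  assumes M: "finite_measure M" "sets M = sets borel"
    and "b > 1" "s > 0" "C > 0" "0 < \<rho>" "\<rho> \<le> 1"
    and lower: "\<And>n. C * \<rho> ^ n \<le> measure M (cball x (s / b ^ n))"
    and "has_local_dim M x a"
  shows "a \<le> log b (1 / \<rho>)"
proof -
  obtain C' where C': "C' > 0" "\<forall>r\<in>{0<..s}. C' * r powr log b (1 / \<rho>) \<le> measure M (cball x r)"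
    using powr_lower_bound_of_geometric[OF assms(3-7) measure_cball_mono[OF M] lower] by blast
  show ?thesis
    by (rule ln_ratio_limit_le_of_powr_lower[where s = s and C = C'
          and f = "\<lambda>r. measure M (cball x r)"])
      (use C' assms(4,9) in \<open>auto simp: has_local_dim_def\<close>)
qed

lemma has_local_dim_unique: "has_local_dim M x a \<Longrightarrow> has_local_dim M x b \<Longrightarrow> a = b"
  unfolding has_local_dim_def by (metis tendsto_unique trivial_limit_at_right_real)

section \<open>Self-similar measures on the line\<close>

locale self_similar =
  fixes d m :: nat and p :: "nat \<Rightarrow> real" and M :: "real measure"
  assumes self_similar: "self_similar_measure d m p M"
    and base_ge_2: "d \<ge> 2"
    and weights_nonneg: "\<And>i. 0 \<le> p i"
begin

sublocale prob_space M
  using self_similar by (simp add: self_similar_measure_def)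

lemma sets_M [simp, measurable_cong]: "sets M = sets borel"
  using self_similar by (simp add: self_similar_measure_def)

lemma finite_measure_M: "finite_measure M"
  by unfold_locales

lemma space_M [simp]: "space M = UNIV"
  using sets_eq_imp_space_eq[OF sets_M] by simp

lemma measure_self_similar:
  "A \<in> sets borel \<Longrightarrow> measure M A = (\<Sum>i\<le>m. p i * measure M ((\<lambda>a. real d * a - real i) ` A))"
  using self_similar by (simp add: self_similar_measure_def)

lemma measure_ge_component:
  assumes "A \<in> sets borel" "i \<le> m"
  shows "p i * measure M ((\<lambda>a. real d * a - real i) ` A) \<le> measure M A"
  unfolding measure_self_similar[OF assms(1)]
  by (rule member_le_sum) (use assms(2) weights_nonneg in auto)

lemma weight_le_1: "i \<le> m \<Longrightarrow> p i \<le> 1"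
proof -
  assume "i \<le> m"
  have "(\<lambda>a. real d * a - real i) ` UNIV = UNIV"
    using base_ge_2 by (intro surjI[of _ "\<lambda>x. (x + real i) / real d"]) auto
  moreover have "prob UNIV = 1" using prob_space by simp
  ultimately show ?thesis
    using measure_ge_component[OF _ \<open>i \<le> m\<close>, of UNIV] by simp
qed

abbreviation right_end :: real where "right_end \<equiv> real m / (real d - 1)"

lemma right_end_fixed: "real d * right_end - real m = right_end"
  using base_ge_2 by (simp add: field_simps)

lemma measure_compl_hull_scale:
  assumes "0 \<le> t" "measure M (- {- t..right_end + t}) = 0"
  shows "measure M (- {- (t / d)..right_end + t / d}) = 0"
proof -
  have d: "real d > 0" using base_ge_2 by simp
  have "measure M ((\<lambda>a. real d * a - real i) ` (- {- (t / d)..right_end + t / d})) = 0"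
    if "i \<le> m" for i
  proof -
    have "real d * a - real i \<in> - {- t..right_end + t}"
      if "a \<notin> {- (t / d)..right_end + t / d}" for a
    proof (cases "a < - (t / d)")
      case True
      then have "real d * a < - t" using d by (simp add: field_simps)
      then show ?thesis by simp
    next
      case False
      then have "real d * right_end + t < real d * a" using that d by (simp add: field_simps)
      then show ?thesis using right_end_fixed \<open>i \<le> m\<close> by simp
    qed
    then have "measure M ((\<lambda>a. real d * a - real i) ` (- {- (t / d)..right_end + t / d}))
        \<le> measure M (- {- t..right_end + t})"
      by (intro finite_measure_mono) auto
    with assms(2) show ?thesis by (simp add: measure_le_0_iff)
  qed
  then show ?thesis by (simp add: measure_self_similar)
qed

lemma measure_outside_hull_eq_0:
  assumes "A \<in> sets borel" "A \<inter> {0..right_end} = {}"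
  shows "measure M A = 0"
proof -
  obtain K where K: "compact K" "emeasure M (- K) = 0"
    using self_similar unfolding self_similar_measure_def by blast
  then obtain R where R: "R > 0" "\<forall>x\<in>K. \<bar>x\<bar> \<le> R"
    using compact_imp_bounded[OF K(1)] by (auto simp: bounded_pos)
  have "right_end \<ge> 0" using base_ge_2 by simp
  have null: "measure M (- {- (R / d ^ n)..right_end + R / d ^ n}) = 0" for n
  proof (induction n)
    case 0
    have "- {- R..right_end + R} \<subseteq> - K" using R(2) \<open>right_end \<ge> 0\<close> by force
    then have "emeasure M (- {- R..right_end + R}) = 0"
      using K emeasure_mono[of "- {- R..right_end + R}" "- K" M]
        by (simp add: borel_open compact_imp_closed)
    then show ?case by (simp add: measure_def)
  next
    case (Suc n)
    then show ?case
      using measure_compl_hull_scale[of "R / d ^ n"] R(1) by (simp add: mult.commute)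
  qed
  have "A \<subseteq> (\<Union>n. - {- (R / d ^ n)..right_end + R / d ^ n})"
  proof
    fix x assume "x \<in> A"
    then have "x < 0 \<or> right_end < x" using assms(2) by force
    then obtain \<epsilon> where "\<epsilon> > 0" "x < - \<epsilon> \<or> right_end + \<epsilon> < x"
    proof (cases "x < 0")
      case False
      then obtain z where "right_end < z" "z < x" using \<open>x < 0 \<or> right_end < x\<close> dense by blast
      then show ?thesis by (intro that[of "z - right_end"]) auto
    qed (auto intro: that[of "- x / 2"])
    moreover obtain n where "(1 / real d) ^ n < \<epsilon> / R"
      using real_arch_pow_inv[of "\<epsilon> / R" "1 / d"] base_ge_2 R(1) \<open>\<epsilon> > 0\<close> by auto
    then have "R / d ^ n < \<epsilon>" using R(1) by (simp add: field_simps)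
    ultimately have "x \<notin> {- (R / d ^ n)..right_end + R / d ^ n}" by auto
    then show "x \<in> (\<Union>n. - {- (R / d ^ n)..right_end + R / d ^ n})" by blast
  qed
  moreover have "(\<Union>n. - {- (R / d ^ n)..right_end + R / d ^ n}) \<in> null_sets M"
    using null by (intro null_sets_UN) (simp add: emeasure_eq_measure null_setsI)
  ultimately show ?thesis
    using assms(1) by (simp add: measure_eq_0_null_sets null_sets_subset)
qed

lemma measure_eq_1_of_hull_subset:
  assumes "A \<in> sets borel" "{0..right_end} \<subseteq> A"
  shows "measure M A = 1"
proof -
  have "measure M (- A) = 0" using assms by (intro measure_outside_hull_eq_0) auto
  then show ?thesis using prob_compl[of A] assms(1) by (simp add: Compl_eq_Diff_UNIV)
qed

lemma msupp_subset_hull: "msupp M \<subseteq> {0..right_end}"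
proof
  fix x assume x: "x \<in> msupp M"
  show "x \<in> {0..right_end}"
  proof (rule ccontr)
    assume "x \<notin> {0..right_end}"
    then obtain r where "r > 0" "cball x r \<subseteq> - {0..right_end}"
      using open_contains_cball[of "- {0..right_end}"] by blast
    then have "measure M (cball x r) = 0" by (intro measure_outside_hull_eq_0) auto
    then show False using x \<open>r > 0\<close> by (auto simp: msupp_def emeasure_eq_measure)
  qed
qed

lemma affine_image_image:
  "(\<lambda>a. real d * a - real i) ` ((\<lambda>a. real d ^ n * a - real j) ` A)
    = (\<lambda>a. real d ^ Suc n * a - real (d * j + i)) ` A"
  by (auto simp: image_image algebra_simps)

lemma measure_iterated:
  assumes A: "A \<in> sets borel"
  shows "measure M A = (\<Sum>k\<le>m * (d ^ n - 1).
    iterated_weight d m p n k * measure M ((\<lambda>a. real d ^ n * a - real k) ` A))"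
proof (induction n)
  case (Suc n)
  define h where "h k = measure M ((\<lambda>a. real d ^ Suc n * a - real k) ` A)" for k
  define R where "R = m * (d ^ n - 1)"
  define R' where "R' = m * (d ^ Suc n - 1)"
  have inner: "measure M ((\<lambda>a. real d ^ n * a - real j) ` A) = (\<Sum>i\<le>m. p i * h (d * j + i))" for j
  proof -
    have "(\<lambda>a. real d ^ n * a - real j) ` A \<in> sets borel"
      using A base_ge_2 by (intro affine_image_borel) auto
    then show ?thesis by (simp add: measure_self_similar affine_image_image h_def)
  qed
  have range: "d * R + i \<le> R'" if "i \<le> m" for i
  proof -
    have "1 \<le> d ^ n" using base_ge_2 by simp
    then have "real (d * R + i) = real d * (real m * (real d ^ n - 1)) + real i"
      by (simp add: R_def)
    also have "\<dots> \<le> real m * (real d * real d ^ n) - real m"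
    proof -
      have "real i \<le> real m" "2 * real m \<le> real d * real m"
        using that base_ge_2 by (simp_all add: mult_right_mono)
      then show ?thesis by (simp add: algebra_simps)
    qed
    also have "\<dots> = real R'"
      using \<open>1 \<le> d ^ n\<close> base_ge_2 by (simp add: R'_def algebra_simps)
    finally show ?thesis by linarith
  qed
  have vanish: "R < j \<Longrightarrow> iterated_weight d m p n j = 0" for j
    using iterated_weight_eq_0[OF base_ge_2] by (simp add: R_def)
  have "measure M A = (\<Sum>j\<le>R. iterated_weight d m p n j * (\<Sum>i\<le>m. p i * h (d * j + i)))"
    using Suc.IH by (simp add: inner R_def)
  also have "\<dots> = (\<Sum>i\<le>m. \<Sum>j\<le>R. (p i * iterated_weight d m p n j) * h (d * j + i))"
    by (subst sum.swap) (simp add: sum_distrib_left mult_ac)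
  also have "\<dots> = (\<Sum>i\<le>m. \<Sum>k\<le>R'. if i \<le> k \<and> d dvd (k - i)
      then (p i * iterated_weight d m p n ((k - i) div d)) * h k else 0)"
    using base_ge_2 range vanish by (intro sum.cong refl sum_reindex_affine) auto
  also have "\<dots> = (\<Sum>k\<le>R'. iterated_weight d m p (Suc n) k * h k)"
    by (subst sum.swap) (auto simp: sum_distrib_right intro!: sum.cong)
  finally show ?case by (simp add: h_def R'_def)
qed simp

lemma sum_iterated_le_measure:
  assumes "A \<in> sets borel" "finite J"
  shows "(\<Sum>k\<in>J. iterated_weight d m p n k * measure M ((\<lambda>a. real d ^ n * a - real k) ` A))
    \<le> measure M A"
proof -
  define g where
    "g k = iterated_weight d m p n k * measure M ((\<lambda>a. real d ^ n * a - real k) ` A)" for k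
  have "(\<Sum>k\<in>J. g k) \<le> (\<Sum>k\<in>J \<union> {..m * (d ^ n - 1)}. g k)"
    using assms(2) weights_nonneg by (intro sum_mono2) (auto simp: g_def iterated_weight_nonneg)
  also have "\<dots> = (\<Sum>k\<le>m * (d ^ n - 1). g k)"
    using assms(2) iterated_weight_eq_0[OF base_ge_2]
      by (intro sum.mono_neutral_right) (auto simp: g_def)
  also have "\<dots> = measure M A"
    using measure_iterated[OF assms(1)] by (simp add: g_def)
  finally show ?thesis by (simp add: g_def)
qed

lemma measure_cball_fixed_point_ge:
  assumes "real d * z - real i = z" "i \<le> m" "0 \<le> R"
  shows "p i ^ n * measure M (cball z R) \<le> measure M (cball z (R / real d ^ n))"
proof (induction n)
  case (Suc n)
  have "(\<lambda>a. real d * a - real i) ` cball z (R / real d ^ Suc n) = cball z (R / real d ^ n)"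
    using base_ge_2 assms(1) by (simp add: affine_image_cball)
  then have "p i * measure M (cball z (R / real d ^ n)) \<le> measure M (cball z (R / real d ^ Suc n))"
    using measure_ge_component[OF _ assms(2), of "cball z (R / real d ^ Suc n)"] by simp
  moreover have
    "p i * (p i ^ n * measure M (cball z R)) \<le> p i * measure M (cball z (R / real d ^ n))"
    using Suc.IH weights_nonneg by (rule mult_left_mono)
  ultimately show ?case by simp
qed simp

lemma measure_cball_end_scale:
  assumes extreme: "z = 0 \<and> i = 0 \<or> z = right_end \<and> i = m" and r: "0 \<le> r" "r < 1"
  shows "measure M (cball z (r / real d)) = p i * measure M (cball z r)"
proof -
  have d: "real d > 0" using base_ge_2 by simp
  have center: "real d * z - real j = z + (real i - real j)" for j
    using extreme right_end_fixed by auto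
  have "measure M (cball (z + (real i - real j)) r) = 0" if "j \<le> m" "j \<noteq> i" for j
  proof (rule measure_outside_hull_eq_0)
    show "cball (z + (real i - real j)) r \<inter> {0..right_end} = {}"
      using extreme that r by (auto simp: dist_real_def abs_le_iff)
  qed simp
  moreover have "i \<le> m" using extreme by auto
  ultimately have "(\<Sum>j\<le>m. p j * measure M (cball (z + (real i - real j)) r))
      = (\<Sum>j\<in>{i}. p j * measure M (cball (z + (real i - real j)) r))"
    by (intro sum.mono_neutral_right) auto
  then show ?thesis
    using d measure_self_similar[of "cball z (r / real d)"] by (simp add: affine_image_cball center)
qed

lemma measure_cball_end_scale_power:
  assumes "z = 0 \<and> i = 0 \<or> z = right_end \<and> i = m" "0 \<le> r" "r < 1"
  shows "measure M (cball z (r / real d ^ n)) = p i ^ n * measure M (cball z r)"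
proof (induction n)
  case (Suc n)
  have "1 \<le> real d ^ n" using base_ge_2 by simp
  then have "r / real d ^ n \<le> r" using assms(2) by (simp add: divide_le_eq mult_le_cancel_left1)
  then have "r / real d ^ n < 1" using assms(3) by linarith
  then show ?case
    using measure_cball_end_scale[OF assms(1), of "r / real d ^ n"] Suc.IH assms(2)
      by (simp add: field_simps)
qed simp

lemma measure_cball_end_pos:
  assumes extreme: "z = 0 \<and> i = 0 \<or> z = right_end \<and> i = m" and "p i > 0" "r > 0"
  shows "measure M (cball z r) > 0"
proof -
  define R where "R = right_end + 1"
  have "right_end \<ge> 0" using base_ge_2 by simp
  then have "{0..right_end} \<subseteq> cball z R"
    using extreme by (auto simp: R_def dist_real_def)
  then have "measure M (cball z R) = 1" by (intro measure_eq_1_of_hull_subset) auto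
  obtain n where "R / r < real d ^ n"
    using real_arch_pow[of "real d" "R / r"] base_ge_2 by auto
  then have "R / real d ^ n < r" using \<open>r > 0\<close> base_ge_2 by (simp add: field_simps)
  have "0 < p i ^ n" using \<open>p i > 0\<close> by simp
  also have "\<dots> = p i ^ n * measure M (cball z R)" using \<open>measure M (cball z R) = 1\<close> by simp
  also have "\<dots> \<le> measure M (cball z (R / real d ^ n))"
    using extreme right_end_fixed \<open>right_end \<ge> 0\<close>
    by (intro measure_cball_fixed_point_ge) (auto simp: R_def)
  also have "\<dots> \<le> measure M (cball z r)"
    using \<open>R / real d ^ n < r\<close> by (intro measure_cball_mono finite_measure_M) auto
  finally show ?thesis .
qed

lemma has_local_dim_end:
  assumes extreme: "z = 0 \<and> i = 0 \<or> z = right_end \<and> i = m" and "p i > 0"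
  shows "has_local_dim M z (log d (1 / p i))"
proof -
  define C where "C = measure M (cball z (1 / 2))"
  have "C > 0" using measure_cball_end_pos[OF assms] by (simp add: C_def)
  have "p i \<le> 1" using extreme weight_le_1 by auto
  have "measure M (cball z (1 / 2 / real d ^ n)) = C * p i ^ n" for n
    using measure_cball_end_scale_power[OF extreme, of "1 / 2"] by (simp add: C_def)
  then show ?thesis
    using base_ge_2 \<open>C > 0\<close> \<open>p i > 0\<close> \<open>p i \<le> 1\<close>
    by (intro has_local_dim_of_geometric_bounds[where b = d and s = "1 / 2" and C = C and D = C]
        finite_measure_M) auto
qed

end

section \<open>Weights of the fourfold binomial cascade\<close>

lemma sum_atMost_4: "(\<Sum>i\<le>(4::nat). f i) = f 0 + f 1 + f 2 + f 3 + (f 4 :: real)"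
  by (simp add: numeral_eq_Suc atMost_Suc)

lemma binomial_4: "(4::nat) choose 0 = 1" "(4::nat) choose 1 = 4" "(4::nat) choose 2 = 6"
  "(4::nat) choose 3 = 4" "(4::nat) choose 4 = 1"
  by (simp_all add: numeral_eq_Suc)

abbreviation conv4_weight :: "nat \<Rightarrow> nat \<Rightarrow> real" where
  "conv4_weight \<equiv> iterated_weight 3 4 (\<lambda>i. real (4 choose i) / 16)"

lemma not_3_dvd:
  "\<not> 3 dvd Suc (3 * q)" "\<not> 3 dvd Suc (Suc (3 * q))" "\<not> 3 dvd 3 * q + 4" "\<not> 3 dvd 3 * q + 2"
  "3 dvd 3 * q - Suc 0 \<longleftrightarrow> q = 0" "3 dvd 3 * q - 2 \<longleftrightarrow> q = 0"
  by presburger+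

lemma conv4_weight_3q2: "16 * conv4_weight (Suc n) (3 * q + 2) = 6 * conv4_weight n q"
  by (simp add: sum_atMost_4 binomial_4 not_3_dvd)

lemma conv4_weight_3q3:
  "16 * conv4_weight (Suc n) (3 * q + 3) = 4 * conv4_weight n q + conv4_weight n (Suc q)"
  by (simp add: sum_atMost_4 binomial_4 not_3_dvd)

lemma conv4_weight_3q4:
  "16 * conv4_weight (Suc n) (3 * q + 4) = conv4_weight n q + 4 * conv4_weight n (Suc q)"
  by (simp add: sum_atMost_4 binomial_4 not_3_dvd)

(* The interval [j, j + 1] / 3^n containing 1/2 has j = center_index n.  The balls of radius
   3^-n around points of [1/2, 3/2] see the adjacent pairs (j, j + 1) with
   center_index n \<le> j + 1 \<le> center_index (n + 1). *)
definition center_index :: "nat \<Rightarrow> nat" where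
  "center_index n = (3 ^ n - 1) div 2"

lemma center_index_eq: "2 * center_index n + 1 = 3 ^ n"
proof -
  have "odd ((3::nat) ^ n)" by simp
  then show ?thesis unfolding center_index_def by presburger
qed

lemma center_index_Suc: "center_index (Suc n) = 3 * center_index n + 1"
  using center_index_eq[of n] center_index_eq[of "Suc n"] by simp

lemma center_index_ge_1: "1 \<le> n \<Longrightarrow> 1 \<le> center_index n"
  by (induction n rule: nat_induct_at_least) (simp_all add: center_index_Suc center_index_def)

(* One refinement step turns an adjacent pair (x, y) of weights into the adjacent pairs
   (6x, 4x + y), (4x + y, x + 4y) and (x + 4y, 6y), divided by 16 (conv4_weight_children).
   Balanced pairs only produce balanced pairs.  A pair with x + y = N and x \<le> y, which occurs
   at the left end of the central window, produces one pair of the same kind and one balanced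
   pair; symmetrically at the right end. *)
definition balanced_pair :: "real \<Rightarrow> real \<Rightarrow> real \<Rightarrow> bool" where
  "balanced_pair N x y \<longleftrightarrow>
     N \<le> x + y \<and> 5 * N \<le> 10 * x + y \<and> 5 * N \<le> x + 10 * y \<and> 2 * x \<le> 3 * y \<and> 2 * y \<le> 3 * x"

lemma balanced_pair_commute: "balanced_pair N x y \<longleftrightarrow> balanced_pair N y x"
  unfolding balanced_pair_def by linarith

lemma balanced_pair_step:
  assumes "balanced_pair N x y" "0 \<le> x" "0 \<le> y" "16 * N' = 5 * N"
    and "16 * x' = 6 * x \<and> 16 * y' = 4 * x + y \<or> 16 * x' = 4 * x + y \<and> 16 * y' = x + 4 * y
      \<or> 16 * x' = x + 4 * y \<and> 16 * y' = 6 * y"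
  shows "balanced_pair N' x' y'"
  using assms unfolding balanced_pair_def by (elim disjE conjE) (intro conjI; linarith)+

lemma left_end_pair_step:
  assumes "x + y = N" "0 \<le> x" "x \<le> y" "16 * N' = 5 * N"
  shows "16 * x' = 4 * x + y \<Longrightarrow> 16 * y' = x + 4 * y \<Longrightarrow> x' + y' = N' \<and> x' \<le> y'"
    and "16 * x' = x + 4 * y \<Longrightarrow> 16 * y' = 6 * y \<Longrightarrow> balanced_pair N' x' y'"
  using assms unfolding balanced_pair_def by (intro conjI; linarith)+

definition window_pair :: "real \<Rightarrow> bool \<Rightarrow> bool \<Rightarrow> real \<Rightarrow> real \<Rightarrow> bool" where
  "window_pair N left right x y \<longleftrightarrow>
     left \<and> x + y = N \<and> x \<le> y \<or> right \<and> x + y = N \<and> y \<le> x \<or> balanced_pair N x y"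

lemma window_pair_mono:
  "window_pair N left right x y \<Longrightarrow> (left \<Longrightarrow> left') \<Longrightarrow> (right \<Longrightarrow> right')
    \<Longrightarrow> window_pair N left' right' x y"
  unfolding window_pair_def by blast

lemma window_pair_sum_ge: "window_pair N left right x y \<Longrightarrow> N \<le> x + y"
  unfolding window_pair_def balanced_pair_def by auto

lemma window_pair_step:
  assumes "window_pair N left right x y" "0 \<le> x" "0 \<le> y" "16 * N' = 5 * N"
    and "left \<Longrightarrow> r \<noteq> 0" "right \<Longrightarrow> r \<noteq> 2"
    and child: "r = 0 \<and> 16 * x' = 6 * x \<and> 16 * y' = 4 * x + y
      \<or> r = 1 \<and> 16 * x' = 4 * x + y \<and> 16 * y' = x + 4 * y
      \<or> r = 2 \<and> 16 * x' = x + 4 * y \<and> 16 * y' = 6 * y"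
  shows "window_pair N' (left \<and> r = 1) (right \<and> r = 1) x' y'"
proof -
  consider "left" "x + y = N" "x \<le> y" | "right" "y + x = N" "y \<le> x" | "balanced_pair N x y"
    using assms(1) unfolding window_pair_def by (auto simp: ac_simps)
  then show ?thesis
  proof cases
    case 1
    then show ?thesis
      using child assms(2,4,5) left_end_pair_step[of x y N N' x' y'] unfolding window_pair_def by auto
  next
    case 2
    then show ?thesis
      using child assms(3,4,6) left_end_pair_step[of y x N N' y' x']
      unfolding window_pair_def by (auto simp: balanced_pair_commute ac_simps)
  next
    case 3
    then show ?thesis
      using child assms(2-4) balanced_pair_step[of N x y N' x' y'] unfolding window_pair_def by auto
  qed
qed

lemma center_window_Suc:
  assumes "1 \<le> n" "center_index (Suc n) \<le> Suc j" "Suc j \<le> center_index (Suc (Suc n))"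
  obtains q r where "r < 3" "Suc j = 3 * Suc q + r"
    "center_index n \<le> Suc q" "Suc q \<le> center_index (Suc n)"
proof -
  define k r where "k = Suc j div 3" and "r = Suc j mod 3"
  have k: "Suc j = 3 * k + r" "r < 3" by (simp_all add: k_def r_def)
  have c: "center_index n \<le> k" "k \<le> center_index (Suc n)"
    using k assms(2,3) center_index_Suc[of n] center_index_Suc[of "Suc n"] by linarith+
  moreover have "1 \<le> k" using center_index_ge_1[OF assms(1)] c(1) by linarith
  ultimately show thesis
    using that[where q = "k - 1" and r = r] k by simp
qed

lemma conv4_weight_children:
  assumes "r < 3"
  shows "r = 0 \<and> 16 * conv4_weight (Suc n) (3 * q + 2 + r) = 6 * conv4_weight n q
        \<and> 16 * conv4_weight (Suc n) (Suc (3 * q + 2 + r))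
          = 4 * conv4_weight n q + conv4_weight n (Suc q)
    \<or> r = 1 \<and> 16 * conv4_weight (Suc n) (3 * q + 2 + r)
          = 4 * conv4_weight n q + conv4_weight n (Suc q)
        \<and> 16 * conv4_weight (Suc n) (Suc (3 * q + 2 + r))
          = conv4_weight n q + 4 * conv4_weight n (Suc q)
    \<or> r = 2 \<and> 16 * conv4_weight (Suc n) (3 * q + 2 + r)
          = conv4_weight n q + 4 * conv4_weight n (Suc q)
        \<and> 16 * conv4_weight (Suc n) (Suc (3 * q + 2 + r)) = 6 * conv4_weight n (Suc q)"
proof -
  consider "r = 0" | "r = 1" | "r = 2" using assms by linarith
  then show ?thesis
  proof cases
    case 1
    then have "3 * q + 2 + r = 3 * q + 2" "Suc (3 * q + 2 + r) = 3 * q + 3" by simp_all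
    with 1 show ?thesis by (simp only: conv4_weight_3q2 conv4_weight_3q3 simp_thms)
  next
    case 2
    then have "3 * q + 2 + r = 3 * q + 3" "Suc (3 * q + 2 + r) = 3 * q + 4" by simp_all
    with 2 show ?thesis by (simp only: conv4_weight_3q3 conv4_weight_3q4 simp_thms)
  next
    case 3
    then have "3 * q + 2 + r = 3 * q + 4" "Suc (3 * q + 2 + r) = 3 * Suc q + 2" by simp_all
    with 3 show ?thesis by (simp only: conv4_weight_3q4 conv4_weight_3q2 simp_thms)
  qed
qed

lemma conv4_weight_window_pair:
  assumes "1 \<le> n" "center_index n \<le> Suc j" "Suc j \<le> center_index (Suc n)"
  shows "window_pair ((5 / 16) ^ n) (Suc j = center_index n) (Suc j = center_index (Suc n))
    (conv4_weight n j) (conv4_weight n (Suc j))"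
  using assms
proof (induction n arbitrary: j rule: nat_induct_at_least)
  case base
  then have "j \<le> 3" by (simp add: center_index_def)
  then consider "j = 0" | "j = 1" | "j = 2" | "j = 3" by linarith
  moreover have "\<not> 3 dvd Suc (Suc (0::nat))" by presburger
  ultimately show ?case
    by cases (simp_all add: sum_atMost_4 binomial_4 center_index_def window_pair_def balanced_pair_def)
next
  case (Suc n)
  obtain q r where r: "r < 3" "Suc j = 3 * Suc q + r"
    and q: "center_index n \<le> Suc q" "Suc q \<le> center_index (Suc n)"
    using center_window_Suc[OF Suc.hyps(1) Suc.prems] .
  have j: "3 * q + 2 + r = j" using r(2) by simp
  have "window_pair ((5 / 16) ^ Suc n) (Suc q = center_index n \<and> r = 1)
      (Suc q = center_index (Suc n) \<and> r = 1) (conv4_weight (Suc n) j) (conv4_weight (Suc n) (Suc j))"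
  proof (rule window_pair_step)
    show "window_pair ((5 / 16) ^ n) (Suc q = center_index n) (Suc q = center_index (Suc n))
      (conv4_weight n q) (conv4_weight n (Suc q))"
      using Suc.IH[OF q] .
    show "r \<noteq> 0" if "Suc q = center_index n"
      using that r(2) Suc.prems(1) by (simp add: center_index_Suc)
    show "r \<noteq> 2" if "Suc q = center_index (Suc n)"
      using that r(2) Suc.prems(2) by (simp add: center_index_Suc)
    show "16 * (5 / 16) ^ Suc n = 5 * (5 / 16 :: real) ^ n" by simp
    show "0 \<le> conv4_weight n q" "0 \<le> conv4_weight n (Suc q)"
      by (simp_all add: iterated_weight_nonneg)
  qed (rule conv4_weight_children[OF r(1), of n q, unfolded j])
  then show ?case
    by (rule window_pair_mono) (use r(2) in \<open>simp_all add: center_index_Suc\<close>)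
qed

lemma conv4_weight_pair_sum_ge:
  assumes "center_index n \<le> Suc j" "Suc j \<le> center_index (Suc n)"
  shows "(5 / 16) ^ n \<le> conv4_weight n j + conv4_weight n (Suc j)"
proof (cases "n = 0")
  case True
  then show ?thesis using assms(2) by (simp add: center_index_def)
next
  case False
  then show ?thesis using conv4_weight_window_pair[OF _ assms] window_pair_sum_ge by simp
qed

section \<open>The fourfold convolution of the Cantor measure\<close>

lemma ex_digit_into_window:
  fixes e x :: real
  assumes "e \<le> 1 / 2" "e / 3 \<le> x" "x \<le> 2 - e / 3"
  obtains i :: nat where "i \<le> 4" "e \<le> 3 * x - i" "3 * x - i \<le> 2 - e"
proof -
  consider "x < 1 / 2" | "3 / 2 < x" | "1 / 2 \<le> x" "x \<le> 5 / 6" | "5 / 6 < x" "x \<le> 7 / 6"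
    | "7 / 6 < x" "x \<le> 3 / 2" by linarith
  then show thesis
  proof cases
    case 1
    then show thesis using assms by (intro that[of 0]) auto
  next
    case 2
    then show thesis using assms by (intro that[of 4]) auto
  next
    case 3
    then show thesis using assms by (intro that[of 1]) auto
  next
    case 4
    then show thesis using assms by (intro that[of 2]) auto
  next
    case 5
    then show thesis using assms by (intro that[of 3]) auto
  qed
qed

locale cantor_conv4 =
  fixes M :: "real measure"
  assumes cantor_conv4: "self_similar_measure 3 4 (\<lambda>i. real (4 choose i) / 16) M"

sublocale cantor_conv4 \<subseteq> self_similar 3 4 "\<lambda>i. real (4 choose i) / 16" M
  using cantor_conv4 by unfold_locales auto

context cantor_conv4 begin

lemma measure_cball_null:
  assumes "c + r < 0 \<or> 2 < c - r"
  shows "measure M (cball c r) = 0"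
  using assms by (intro measure_outside_hull_eq_0) (auto simp: dist_real_def abs_le_iff)

(* Of the five images of these balls only the ones centred at 1/2 and 3/2 meet [0, 2]. *)
lemma measure_cball_one_third:
  assumes "0 \<le> r" "r < 1 / 2"
  shows "16 * measure M (cball (1 / 2) (r / 3))
           = 4 * measure M (cball (1 / 2) r) + measure M (cball (3 / 2) r)"
    and "16 * measure M (cball (3 / 2) (r / 3))
           = measure M (cball (1 / 2) r) + 4 * measure M (cball (3 / 2) r)"
proof -
  have img: "(\<lambda>a. 3 * a - real i) ` cball c (r / 3) = cball (3 * c - real i) r" for c i
    using affine_image_cball[of 3 "real i" c "r / 3"] by simp
  show "16 * measure M (cball (1 / 2) (r / 3))
           = 4 * measure M (cball (1 / 2) r) + measure M (cball (3 / 2) r)"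
    using measure_self_similar[of "cball (1 / 2) (r / 3)"] assms
    by (simp add: img sum_atMost_4 binomial_4 measure_cball_null)
  show "16 * measure M (cball (3 / 2) (r / 3))
           = measure M (cball (1 / 2) r) + 4 * measure M (cball (3 / 2) r)"
    using measure_self_similar[of "cball (3 / 2) (r / 3)"] assms
    by (simp add: img sum_atMost_4 binomial_4 measure_cball_null)
qed

lemma measure_cball_half_sum:
  "measure M (cball (1 / 2) (1 / 3 / 3 ^ n)) + measure M (cball (3 / 2) (1 / 3 / 3 ^ n))
    = (5 / 16) ^ n * (measure M (cball (1 / 2) (1 / 3)) + measure M (cball (3 / 2) (1 / 3)))"
proof (induction n)
  case (Suc n)
  have "1 / 3 / 3 ^ n < (1 / 2 :: real)"
    by (rule le_less_trans[of _ "1 / 3"]) (simp_all add: divide_le_eq)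
  then have "measure M (cball (1 / 2) (1 / 3 / 3 ^ n / 3))
      + measure M (cball (3 / 2) (1 / 3 / 3 ^ n / 3))
    = 5 / 16 * (measure M (cball (1 / 2) (1 / 3 / 3 ^ n))
      + measure M (cball (3 / 2) (1 / 3 / 3 ^ n)))"
    using measure_cball_one_third[of "1 / 3 / 3 ^ n"] by simp
  also have "1 / 3 / 3 ^ n / 3 = 1 / 3 / (3 :: real) ^ Suc n" by simp
  finally show ?case using Suc.IH by simp
qed simp

lemma measure_cball_half_pos: "0 < measure M (cball (1 / 2) (1 / 3))"
proof -
  have "(\<lambda>a. 3 * a - real 0) ` cball (1 / 2) (1 / 3) = cball (3 / 2) 1"
    "(\<lambda>a. 3 * a - real 4) ` cball (3 / 2) 1 = cball (1 / 2) 3"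
    using affine_image_cball[of 3 "real 0" "1 / 2" "1 / 3"]
      affine_image_cball[of 3 "real 4" "3 / 2" 1]
    by simp_all
  then have "1 / 16 * measure M (cball (3 / 2) 1) \<le> measure M (cball (1 / 2) (1 / 3))"
    "1 / 16 * measure M (cball (1 / 2) 3) \<le> measure M (cball (3 / 2) 1)"
    using measure_ge_component[of "cball (1 / 2) (1 / 3)" 0]
      measure_ge_component[of "cball (3 / 2) 1" 4] by (simp_all add: binomial_4)
  moreover have "measure M (cball (1 / 2) 3) = 1"
    by (intro measure_eq_1_of_hull_subset) (auto simp: dist_real_def)
  ultimately show ?thesis by simp
qed

lemma has_local_dim_half: "has_local_dim M (1 / 2) (log 3 (16 / 5))"
proof -
  define S where "S = measure M (cball (1 / 2) (1 / 3)) + measure M (cball (3 / 2) (1 / 3))"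
  have "S > 0" using measure_cball_half_pos measure_nonneg[of M] by (simp add: S_def add_pos_nonneg)
  have "S \<le> 2"
    using prob_le_1[of "cball (1 / 2) (1 / 3)"] prob_le_1[of "cball (3 / 2) (1 / 3)"]
    unfolding S_def by linarith
  have "S / 16 * (5 / 16) ^ n \<le> measure M (cball (1 / 2) (1 / 9 / 3 ^ n)) \<and>
    measure M (cball (1 / 2) (1 / 9 / 3 ^ n)) \<le> 2 * (5 / 16) ^ n" for n
  proof -
    define a where "a = measure M (cball (1 / 2) (1 / 3 / 3 ^ n))"
    define b where "b = measure M (cball (3 / 2) (1 / 3 / 3 ^ n))"
    have "1 / 3 / 3 ^ n < (1 / 2 :: real)"
      by (rule le_less_trans[of _ "1 / 3"]) (simp_all add: divide_le_eq)
    then have "16 * measure M (cball (1 / 2) (1 / 9 / 3 ^ n)) = 4 * a + b"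
      using measure_cball_one_third(1)[of "1 / 3 / 3 ^ n"] by (simp add: a_def b_def)
    moreover define P where "P = (5 / 16 :: real) ^ n"
    have "a + b = P * S"
      using measure_cball_half_sum by (simp add: S_def a_def b_def P_def)
    moreover have "P * S \<le> P * 2" "0 \<le> P" using \<open>S \<le> 2\<close> by (simp_all add: P_def)
    moreover have "0 \<le> a" "0 \<le> b" by (simp_all add: a_def b_def)
    ultimately have "P * S \<le> 16 * measure M (cball (1 / 2) (1 / 9 / 3 ^ n)) \<and>
      measure M (cball (1 / 2) (1 / 9 / 3 ^ n)) \<le> 2 * P"
      by (intro conjI) linarith+
    then show ?thesis by (simp add: P_def mult.commute)
  qed
  then have "has_local_dim M (1 / 2) (log 3 (1 / (5 / 16)))"
    using \<open>S > 0\<close>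
      by (intro has_local_dim_of_geometric_bounds[where b = 3 and s = "1 / 9" and C = "S / 16"
        and D = 2] finite_measure_M) auto
  then show ?thesis by simp
qed

lemma measure_cball_1_ge:
  assumes "0 \<le> t" "t \<le> 2"
  shows "1 / 16 \<le> measure M (cball t 1)"
proof -
  have "(\<lambda>a. 3 * a - real 0) ` cball (1 / 2) (1 / 2) = cball (3 / 2) (3 / 2)"
    "(\<lambda>a. 3 * a - real 4) ` cball (3 / 2) (1 / 2) = cball (1 / 2) (3 / 2)"
    using affine_image_cball[of 3 "real 0" "1 / 2" "1 / 2"]
      affine_image_cball[of 3 "real 4" "3 / 2" "1 / 2"]
    by simp_all
  moreover have "measure M (cball (3 / 2) (3 / 2)) = 1"
    by (intro measure_eq_1_of_hull_subset) (auto simp: dist_real_def abs_if)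
  moreover have "measure M (cball (1 / 2) (3 / 2)) = 1"
    by (intro measure_eq_1_of_hull_subset) (auto simp: dist_real_def abs_if)
  ultimately have half: "1 / 16 \<le> measure M (cball (1 / 2) (1 / 2))"
    "1 / 16 \<le> measure M (cball (3 / 2) (1 / 2))"
    using measure_ge_component[of "cball (1 / 2) (1 / 2)" 0]
      measure_ge_component[of "cball (3 / 2) (1 / 2)" 4] by (simp_all add: binomial_4)
  have mono: "measure M (cball c (1 / 2)) \<le> measure M (cball t 1)" if "\<bar>t - c\<bar> \<le> 1 / 2" for c
    using that by (intro finite_measure_mono)
      (simp_all add: cball_subset_cball_iff dist_real_def abs_minus_commute)
  show ?thesis
  proof (cases "t \<le> 1")
    case True
    then have "\<bar>t - 1 / 2\<bar> \<le> 1 / 2" unfolding abs_le_iff using assms by simp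
    then show ?thesis using half(1) mono by fastforce
  next
    case False
    then have "\<bar>t - 3 / 2\<bar> \<le> 1 / 2" unfolding abs_le_iff using assms by simp
    then show ?thesis using half(2) mono by fastforce
  qed
qed

lemma measure_cball_middle_ge:
  assumes y: "1 / 2 \<le> y" "y \<le> 3 / 2"
  shows "(5 / 16) ^ n / 16 \<le> measure M (cball y (1 / 3 ^ n))"
proof (cases "n = 0")
  case True
  then show ?thesis using measure_cball_1_ge[of y] y by simp
next
  case False
  define N :: real where "N = 3 ^ n"
  have "(3::real) ^ 1 \<le> 3 ^ n" using False by (intro power_increasing) auto
  then have "3 \<le> N" by (simp add: N_def)
  define k where "k = nat \<lfloor>N * y\<rfloor>"
  have k: "real k \<le> N * y" "N * y < real k + 1"
    using y \<open>3 \<le> N\<close> by (simp_all add: k_def)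
  have c: "2 * real (center_index n) + 1 = N" "2 * real (center_index (Suc n)) + 1 = 3 * N"
    using arg_cong[OF center_index_eq[of n], of real]
      arg_cong[OF center_index_eq[of "Suc n"], of real]
    by (simp_all add: N_def)
  have "N / 2 \<le> N * y" "N * y \<le> 3 * N / 2" using y \<open>3 \<le> N\<close> by simp_all
  then have window: "center_index n \<le> k" "k \<le> center_index (Suc n)" "0 < real k"
    using k c \<open>3 \<le> N\<close> by linarith+
  then obtain j where j: "k = Suc j" by (cases k) auto
  have img: "(\<lambda>a. 3 ^ n * a - real i) ` cball y (1 / 3 ^ n) = cball (N * y - real i) 1" for i
    using affine_image_cball[of "3 ^ n" "real i" y "1 / 3 ^ n"] by (simp add: N_def)
  have "(5 / 16) ^ n / 16 \<le> (conv4_weight n j + conv4_weight n (Suc j)) / 16"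
    using conv4_weight_pair_sum_ge[of n j] window j by simp
  also have "\<dots> \<le> conv4_weight n j * measure M (cball (N * y - real j) 1)
      + conv4_weight n (Suc j) * measure M (cball (N * y - real (Suc j)) 1)"
  proof -
    have "1 / 16 \<le> measure M (cball (N * y - real j) 1)"
      "1 / 16 \<le> measure M (cball (N * y - real (Suc j)) 1)"
      using k j by (intro measure_cball_1_ge; simp)+
    then have
      "conv4_weight n j * (1 / 16) \<le> conv4_weight n j * measure M (cball (N * y - real j) 1)"
      "conv4_weight n (Suc j) * (1 / 16)
        \<le> conv4_weight n (Suc j) * measure M (cball (N * y - real (Suc j)) 1)"
      by (intro mult_left_mono iterated_weight_nonneg; simp)+
    then show ?thesis by simp
  qed
  also have "\<dots> \<le> measure M (cball y (1 / 3 ^ n))"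
    using sum_iterated_le_measure[of "cball y (1 / 3 ^ n)" "{j, Suc j}" n] by (simp add: img)
  finally show ?thesis .
qed

(* The map a \<mapsto> 3a (resp. 3a - 4) pushes a point away from 0 (resp. 2), and a point of
   [1/2, 3/2] is sent back into [1/2, 3/2] by one of the middle maps; each step costs a
   factor p_i \<ge> 1/16. *)
lemma measure_cball_zoom_to_middle:
  assumes "1 / (2 * 3 ^ m) \<le> x" "x \<le> 2 - 1 / (2 * 3 ^ m)"
  shows "\<exists>y\<in>{1 / 2..3 / 2}. \<forall>r\<ge>0.
    (1 / 16) ^ m * measure M (cball y r) \<le> measure M (cball x (r / 3 ^ m))"
  using assms
proof (induction m arbitrary: x)
  case (Suc m)
  define e :: real where "e = 1 / (2 * 3 ^ m)"
  have "e \<le> 1 / 2" by (simp add: e_def)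
  have x: "e / 3 \<le> x" "x \<le> 2 - e / 3" using Suc.prems by (simp_all add: e_def)
  obtain i :: nat where i: "i \<le> 4" "e \<le> 3 * x - i" "3 * x - i \<le> 2 - e"
    using ex_digit_into_window[OF \<open>e \<le> 1 / 2\<close> x] .
  then obtain y where y: "y \<in> {1 / 2..3 / 2}"
    and zoom: "\<And>r. 0 \<le> r \<Longrightarrow>
      (1 / 16) ^ m * measure M (cball y r) \<le> measure M (cball (3 * x - i) (r / 3 ^ m))"
    using Suc.IH[of "3 * x - i"] by (auto simp: e_def)
  have "(1 / 16) ^ Suc m * measure M (cball y r) \<le> measure M (cball x (r / 3 ^ Suc m))"
    if "0 \<le> r" for r
  proof -
    have img: "(\<lambda>a. real 3 * a - real i) ` cball x (r / 3 ^ Suc m) = cball (3 * x - i) (r / 3 ^ m)"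
      using affine_image_cball[of 3 "real i" x "r / 3 ^ Suc m"] by simp
    have "(1 / 16) ^ Suc m * measure M (cball y r)
        \<le> 1 / 16 * measure M (cball (3 * x - i) (r / 3 ^ m))"
      using zoom[OF that] by simp
    also have "\<dots> \<le> real (4 choose i) / 16 * measure M (cball (3 * x - i) (r / 3 ^ m))"
      using i(1) by (intro mult_right_mono) (simp_all add: Suc_leI)
    also have "\<dots> \<le> measure M (cball x (r / 3 ^ Suc m))"
      using measure_ge_component[OF _ i(1), of "cball x (r / 3 ^ Suc m)", unfolded img] by simp
    finally show ?thesis .
  qed
  with y show ?case by blast
qed auto

lemma measure_cball_interior_ge:
  assumes "0 < x" "x < 2"
  obtains C where "C > 0" "\<And>n. C * (5 / 16) ^ n \<le> measure M (cball x (1 / 3 ^ n))"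
proof -
  obtain m where "(1 / 3) ^ m < 2 * min x (2 - x)"
    using real_arch_pow_inv[of "2 * min x (2 - x)" "1 / 3"] assms by auto
  moreover have "1 / (2 * 3 ^ m) = (1 / 3 :: real) ^ m / 2" by (simp add: power_one_over)
  ultimately have "1 / (2 * 3 ^ m) \<le> x" "x \<le> 2 - 1 / (2 * 3 ^ m)"
    by (simp_all add: min_def split: if_splits)
  then obtain y where "y \<in> {1 / 2..3 / 2}"
    and zoom: "\<forall>r\<ge>0. (1 / 16) ^ m * measure M (cball y r) \<le> measure M (cball x (r / 3 ^ m))"
    using measure_cball_zoom_to_middle by blast
  then have y: "1 / 2 \<le> y" "y \<le> 3 / 2" by simp_all
  show thesis
  proof (rule that[of "(1 / 16) ^ m / 16"])
    fix n
    have "(1 / 16) ^ m / 16 * (5 / 16) ^ n \<le> (1 / 16) ^ m * measure M (cball y (1 / 3 ^ n))"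
      using measure_cball_middle_ge[OF y, of n] by (simp add: mult_left_mono)
    also have "\<dots> \<le> measure M (cball x (1 / 3 ^ n / 3 ^ m))"
      using zoom[rule_format, of "1 / 3 ^ n"] by simp
    also have "\<dots> \<le> measure M (cball x (1 / 3 ^ n))"
      by (intro measure_cball_mono finite_measure_M sets_M) (simp add: divide_le_eq)
    finally show "(1 / 16) ^ m / 16 * (5 / 16) ^ n \<le> measure M (cball x (1 / 3 ^ n))" .
  qed simp
qed

lemma local_dim_interior_le:
  assumes "0 < x" "x < 2" "has_local_dim M x a"
  shows "a \<le> log 3 (16 / 5)"
proof -
  obtain C where "C > 0" "\<And>n. C * (5 / 16) ^ n \<le> measure M (cball x (1 / 3 ^ n))"
    using measure_cball_interior_ge[OF assms(1,2)] by blast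
  then have "a \<le> log 3 (1 / (5 / 16))"
    using assms(3) by (intro local_dim_le_of_geometric_lower[where b = 3 and s = 1 and C = C]
        finite_measure_M sets_M) auto
  then show ?thesis by simp
qed

lemma local_dim_le:
  assumes "x \<in> msupp M" "has_local_dim M x a" "a \<noteq> log 3 16"
  shows "a \<le> log 3 (16 / 5)"
proof -
  have "has_local_dim M 0 (log 3 16)" "has_local_dim M 2 (log 3 16)"
    using has_local_dim_end[of 0 0] has_local_dim_end[of 2 4] by (simp_all add: binomial_4)
  then have "x \<noteq> 0" "x \<noteq> 2" using assms(2,3) has_local_dim_unique by blast+
  moreover have "0 \<le> x" "x \<le> 2" using assms(1) msupp_subset_hull by auto
  ultimately have "0 < x" "x < 2" by (auto simp: less_le)
  then show ?thesis using local_dim_interior_le assms(2) by blast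
qed

lemma half_in_msupp: "1 / 2 \<in> msupp M"
  unfolding msupp_def
proof (intro CollectI allI impI)
  fix r :: real assume "r > 0"
  then obtain n where "(1 / 3) ^ n < r" using real_arch_pow_inv[of r "1 / 3"] by auto
  then have "(5 / 16) ^ n / 16 \<le> measure M (cball (1 / 2) r)"
    using measure_cball_middle_ge[of "1 / 2" n]
      measure_cball_mono[OF finite_measure_M sets_M, of "1 / 3 ^ n" r "1 / 2"]
    by (simp add: power_one_over)
  moreover have "0 < (5 / 16 :: real) ^ n / 16" by simp
  ultimately have "0 < measure M (cball (1 / 2) r)" by linarith
  then show "emeasure M (cball (1 / 2) r) > 0" by (simp add: emeasure_eq_measure)
qed

end

lemma log_3_16: "log 3 16 = 4 * ln 2 / ln (3::real)"
  using ln_realpow[of 2 4] by (simp add: log_def)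

theorem lemma20:
  fixes M :: "real measure"
  assumes "self_similar_measure 3 4 (\<lambda>i. real (4 choose i) / 16) M"
  shows "Sup (local_dims M - {4 * ln 2 / ln 3}) = ln (16 / 5) / ln 3
         \<and> 1 / 2 \<in> msupp M
         \<and> has_local_dim M (1 / 2) (ln (16 / 5) / ln 3)"
proof -
  interpret cantor_conv4 M by unfold_locales (rule assms)
  have "log 3 (16 / 5) \<noteq> log 3 (16 :: real)" by (simp add: log_def)
  then have max: "log 3 (16 / 5) \<in> local_dims M - {log 3 16}"
    using has_local_dim_half half_in_msupp by (auto simp: local_dims_def)
  then have "Sup (local_dims M - {log 3 16}) = log 3 (16 / 5)"
    using local_dim_le by (intro cSup_eq_maximum) (auto simp: local_dims_def)
  then show ?thesis
    using has_local_dim_half half_in_msupp by (simp only: log_3_16) (simp add: log_def)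
qed

end
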